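(* Let $(\mathcal V,\mathcal W,\lambda)$ be a FTvN system. Then it comes from a normal decomposition system if and only if it is orbit-transitive, $\mathcal W\subseteq\mathcal V$, and $\lambda^2=\lambda$.
   Context: A Fan-Theobald-von Neumann (FTvN) system is a triple $(\mathcal V,\mathcal W,\lambda)$ where $\mathcal V,\mathcal W$ are real inner product spaces and $\lambda:\mathcal V\to\mathcal W$ is a map such that: (A1) $\|\lambda(x)\|=\|x\|$ for all $x$; (A2) $\langle x,y\rangle\le\langle\lambda(x),\lambda(y)\rangle$ for all $x,y$; (A3) for every $c\in\mathcal V$ and $q\in\lambda(\mathcal V)$ there exists $x$ with $\lambda(x)=q$ and $\langle c,x\rangle=\langle\lambda(c),\lambda(x)\rangle$. An automorphism of the system is an invertible linear map $A:\mathcal V\to\mathcal V$ with $\lambda(Ax)=\lambda(x)$ for all $x$; the set of automorphisms is $\operatorname{Aut}(\mathcal V,\mathcal W,\lambda)$ (a closed subgroup of the orthogonal group $\mathcal O(\mathcal V)$). The system is orbit-transitive if whenever $x,y\in\mathcal V$ with $\lambda(x)=\lambda(y)$ there is $A\in\operatorname{Aut}(\mathcal V,\mathcal W,\lambda)$ with $y=Ax$. A normal decomposition system (NDS) is a triple $(\mathcal V,\mathcal G,\gamma)$ with $\mathcal V$ a real inner product space, $\mathcal G$ a closed subgroup of $\mathcal O(\mathcal V)$ and $\gamma:\mathcal V\to\mathcal V$ such that (a) $\gamma(Ax)=\gamma(x)$ for all $x\in\mathcal V$, $A\in\mathcal G$; (b) for each $x$ there is $A\in\mathcal G$ with $x=A\gamma(x)$;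 (c) $\langle x,y\rangle\le\langle\gamma(x),\gamma(y)\rangle$ for all $x,y$. An NDS $(\mathcal V,\mathcal G,\gamma)$ yields the FTvN system $(\mathcal V,\operatorname{span}(\gamma(\mathcal V)),\gamma)$. The FTvN system $(\mathcal V,\mathcal W,\lambda)$ is said to come from an NDS if $\mathcal W$ is a linear subspace of $\mathcal V$ with the induced inner product and there is a closed subgroup $\mathcal G$ of $\mathcal O(\mathcal V)$ such that $(\mathcal V,\mathcal G,\lambda)$ is an NDS (viewing $\lambda$ as a map into $\mathcal V$). *)

theory Defs
  imports "HOL-Analysis.Analysis"
begin

text \<open>All spaces live as linear subspaces of a common ambient real inner product
space of type 'a, with the induced inner product. Maps on V are functions
'a => 'a; to make them extensional we require them to be the identity outside V.\<close>

definition linear_on_sub :: "'a::real_inner set \<Rightarrow> ('a \<Rightarrow> 'a) \<Rightarrow> bool" where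
  "linear_on_sub V A \<longleftrightarrow>
     (\<forall>x\<in>V. \<forall>y\<in>V. A (x + y) = A x + A y) \<and> (\<forall>c. \<forall>x\<in>V. A (c *\<^sub>R x) = c *\<^sub>R A x)"

definition orth_group :: "'a::real_inner set \<Rightarrow> ('a \<Rightarrow> 'a) set" where
  "orth_group V = {A. linear_on_sub V A \<and> bij_betw A V V \<and>
      (\<forall>x\<in>V. \<forall>y\<in>V. inner (A x) (A y) = inner x y) \<and> (\<forall>x. x \<notin> V \<longrightarrow> A x = x)}"

text \<open>Closed subgroup of O(V) (closedness w.r.t. the operator norm topology:
uniform convergence on the unit ball of V).\<close>
definition closed_subgroup_orth :: "'a::real_inner set \<Rightarrow> ('a \<Rightarrow> 'a) set \<Rightarrow> bool" where
  "closed_subgroup_orth V G \<longleftrightarrow>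
     G \<subseteq> orth_group V \<and> (\<lambda>x. x) \<in> G \<and>
     (\<forall>A\<in>G. \<forall>B\<in>G. A \<circ> B \<in> G) \<and>
     (\<forall>A\<in>G. \<exists>B\<in>G. \<forall>x\<in>V. B (A x) = x) \<and>
     (\<forall>f A. (\<forall>n. f n \<in> G) \<and> A \<in> orth_group V \<and>
        (\<forall>e>0. eventually (\<lambda>n. \<forall>x\<in>V. norm x \<le> 1 \<longrightarrow> norm (f n x - A x) \<le> e) sequentially)
        \<longrightarrow> A \<in> G)"

definition ftvn :: "'a::real_inner set \<Rightarrow> 'a set \<Rightarrow> ('a \<Rightarrow> 'a) \<Rightarrow> bool" where
  "ftvn V W lam \<longleftrightarrow> subspace V \<and> subspace W \<and> (\<forall>x\<in>V. lam x \<in> W) \<and>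
     (\<forall>x\<in>V. norm (lam x) = norm x) \<and>
     (\<forall>x\<in>V. \<forall>y\<in>V. inner x y \<le> inner (lam x) (lam y)) \<and>
     (\<forall>c\<in>V. \<forall>q\<in>lam ` V. \<exists>x\<in>V. lam x = q \<and> inner c x = inner (lam c) (lam x))"

definition aut :: "'a::real_inner set \<Rightarrow> ('a \<Rightarrow> 'a) \<Rightarrow> ('a \<Rightarrow> 'a) set" where
  "aut V lam = {A. linear_on_sub V A \<and> bij_betw A V V \<and> (\<forall>x\<in>V. lam (A x) = lam x) \<and>
                  (\<forall>x. x \<notin> V \<longrightarrow> A x = x)}"

definition orbit_transitive :: "'a::real_inner set \<Rightarrow> ('a \<Rightarrow> 'a) \<Rightarrow> bool" where
  "orbit_transitive V lam \<longleftrightarrow> (\<forall>x\<in>V. \<forall>y\<in>V. lam x = lam y \<longrightarrow> (\<exists>A\<in>aut V lam. y = A x))"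

definition nds :: "'a::real_inner set \<Rightarrow> ('a \<Rightarrow> 'a) set \<Rightarrow> ('a \<Rightarrow> 'a) \<Rightarrow> bool" where
  "nds V G gam \<longleftrightarrow> subspace V \<and> closed_subgroup_orth V G \<and> (\<forall>x\<in>V. gam x \<in> V) \<and>
     (\<forall>x\<in>V. \<forall>A\<in>G. gam (A x) = gam x) \<and>
     (\<forall>x\<in>V. \<exists>A\<in>G. x = A (gam x)) \<and>
     (\<forall>x\<in>V. \<forall>y\<in>V. inner x y \<le> inner (gam x) (gam y))"

definition comes_from_nds :: "'a::real_inner set \<Rightarrow> 'a set \<Rightarrow> ('a \<Rightarrow> 'a) \<Rightarrow> bool" where
  "comes_from_nds V W lam \<longleftrightarrow> W \<subseteq> V \<and> (\<exists>G. nds V G lam)"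

end

theory Submission
  imports Defs
begin

text \<open>If \<open>(V, G, lam)\<close> is an NDS, every \<open>x\<close> equals \<open>A (lam x)\<close> for some
  \<open>A \<in> G\<close>; invariance of \<open>lam\<close> under \<open>A\<close> makes \<open>lam\<close> idempotent, and two
  points \<open>x = A (lam x)\<close>, \<open>y = B (lam y)\<close> with \<open>lam x = lam y\<close> are related by
  \<open>B \<circ> inv A\<close>.  Conversely, take for \<open>G\<close> the full automorphism group.  It lies in
  \<open>O(V)\<close> because \<open>lam\<close> preserves norms, and it is closed because (A1) and (A2)
  make \<open>lam\<close> nonexpansive, so a limit of automorphisms still leaves \<open>lam\<close>
  invariant.  Since \<open>lam\<close> is idempotent, \<open>x\<close> and \<open>lam x\<close> have the same
  \<open>lam\<close>-value, and orbit transitivity supplies \<open>A\<close> with \<open>x = A (lam x)\<close>.\<close>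

lemma linear_on_sub_comp:
  assumes "linear_on_sub V A" "linear_on_sub V B" "B ` V \<subseteq> V"
  shows "linear_on_sub V (A \<circ> B)"
  using assms unfolding linear_on_sub_def by (auto simp: image_subset_iff)

lemma linear_on_sub_diff:
  assumes "linear_on_sub V A" "subspace V" "x \<in> V" "y \<in> V"
  shows "A (x - y) = A x - A y"
proof -
  have "A ((x - y) + y) = A (x - y) + A y"
    using assms subspace_diff unfolding linear_on_sub_def by blast
  then show ?thesis by (simp add: eq_diff_eq)
qed

lemma linear_on_sub_right_inverse:
  assumes lin: "linear_on_sub V A" and inj: "inj_on A V" and V: "subspace V"
    and B: "\<And>x. x \<in> V \<Longrightarrow> B x \<in> V \<and> A (B x) = x"
  shows "linear_on_sub V B"
  unfolding linear_on_sub_def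
proof (intro conjI ballI allI)
  fix x y assume "x \<in> V" "y \<in> V"
  then have "A (B (x + y)) = A (B x + B y)"
    using lin B subspace_add[OF V] unfolding linear_on_sub_def by metis
  then show "B (x + y) = B x + B y"
    using inj_onD[OF inj] B \<open>x \<in> V\<close> \<open>y \<in> V\<close> subspace_add[OF V] by metis
next
  fix c x assume "x \<in> V"
  then have "A (B (c *\<^sub>R x)) = A (c *\<^sub>R B x)"
    using lin B subspace_scale[OF V] unfolding linear_on_sub_def by metis
  then show "B (c *\<^sub>R x) = c *\<^sub>R B x"
    using inj_onD[OF inj] B \<open>x \<in> V\<close> subspace_scale[OF V] by metis
qed

lemma linear_on_sub_tendsto_of_uniform_on_unit_ball:
  assumes V: "subspace V" and lin: "\<And>n. linear_on_sub V (f n)" "linear_on_sub V A"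
    and unif: "\<forall>e>0. eventually (\<lambda>n. \<forall>x\<in>V. norm x \<le> 1 \<longrightarrow> norm (f n x - A x) \<le> e) sequentially"
    and x: "x \<in> V"
  shows "(\<lambda>n. f n x) \<longlonglongrightarrow> A x"
proof -
  define r where "r = norm x + 1"
  have r: "r > 0" by (simp add: r_def add_nonneg_pos)
  define u where "u = inverse r *\<^sub>R x"
  have u: "u \<in> V" "norm u \<le> 1"
    using subspace_scale[OF V x] r by (auto simp: u_def r_def field_simps)
  have "f n x - A x = r *\<^sub>R (f n u - A u)" for n
    using lin u(1) r x unfolding linear_on_sub_def u_def by (simp add: scaleR_diff_right)
  then have scaled: "norm (f n x - A x) = r * norm (f n u - A u)" for n
    using r by simp
  show ?thesis
    unfolding tendsto_iff dist_norm
  proof (intro allI impI)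
    fix e :: real assume "e > 0"
    then have "e / (2 * r) > 0" using r by simp
    with unif have "eventually (\<lambda>n. \<forall>x\<in>V. norm x \<le> 1 \<longrightarrow> norm (f n x - A x) \<le> e / (2 * r)) sequentially"
      by blast
    then have "eventually (\<lambda>n. norm (f n u - A u) \<le> e / (2 * r)) sequentially"
      by (rule eventually_mono) (use u in blast)
    then show "eventually (\<lambda>n. norm (f n x - A x) < e) sequentially"
      by (rule eventually_mono) (use r \<open>e > 0\<close> in \<open>simp add: scaled field_simps\<close>)
  qed
qed

lemma ftvn_nonexpansive:
  assumes "ftvn V W lam" "x \<in> V" "y \<in> V"
  shows "norm (lam x - lam y) \<le> norm (x - y)"
proof -
  have "norm (lam x) = norm x" "norm (lam y) = norm y" "inner x y \<le> inner (lam x) (lam y)"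
    using assms unfolding ftvn_def by auto
  then have "(norm (lam x - lam y))\<^sup>2 \<le> (norm (x - y))\<^sup>2"
    using dot_norm_neg[of x y] dot_norm_neg[of "lam x" "lam y"] by simp
  then show ?thesis by (rule power2_le_imp_le) simp
qed

lemma aut_maps_into: "A \<in> aut V lam \<Longrightarrow> x \<in> V \<Longrightarrow> A x \<in> V"
  unfolding aut_def bij_betw_def by auto

lemma aut_subset_orth_group:
  assumes f: "ftvn V W lam"
  shows "aut V lam \<subseteq> orth_group V"
proof
  fix A assume A: "A \<in> aut V lam"
  have V: "subspace V" using f unfolding ftvn_def by simp
  have norm_A: "norm (A x) = norm x" if "x \<in> V" for x
  proof -
    have "norm (A x) = norm (lam (A x))" using f aut_maps_into[OF A that] unfolding ftvn_def by simp
    also have "\<dots> = norm (lam x)" using A that unfolding aut_def by simp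
    also have "\<dots> = norm x" using f that unfolding ftvn_def by simp
    finally show ?thesis .
  qed
  have "inner (A x) (A y) = inner x y" if "x \<in> V" "y \<in> V" for x y
  proof -
    have "norm (A x - A y) = norm (A (x - y))"
      using A linear_on_sub_diff[OF _ V that] unfolding aut_def by simp
    also have "\<dots> = norm (x - y)"
      using norm_A subspace_diff[OF V that] by blast
    finally have "norm (A x - A y) = norm (x - y)" .
    then show ?thesis
      using dot_norm_neg[of x y] dot_norm_neg[of "A x" "A y"] norm_A that by simp
  qed
  then show "A \<in> orth_group V"
    using A unfolding aut_def orth_group_def by auto
qed

lemma aut_id: "(\<lambda>x. x) \<in> aut V lam"
  unfolding aut_def linear_on_sub_def by (simp add: bij_betw_def)

lemma aut_comp:
  assumes A: "A \<in> aut V lam" and B: "B \<in> aut V lam"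
  shows "A \<circ> B \<in> aut V lam"
proof -
  have "B ` V \<subseteq> V" using aut_maps_into[OF B] by blast
  then have "linear_on_sub V (A \<circ> B)"
    using linear_on_sub_comp A B unfolding aut_def by blast
  moreover have "bij_betw (A \<circ> B) V V"
    using bij_betw_trans A B unfolding aut_def by blast
  ultimately show ?thesis
    using A B aut_maps_into[OF B] unfolding aut_def by simp
qed

lemma aut_left_inverse:
  assumes V: "subspace V" and A: "A \<in> aut V lam"
  shows "\<exists>B\<in>aut V lam. \<forall>x\<in>V. B (A x) = x"
proof -
  have lin: "linear_on_sub V A" and bij: "bij_betw A V V"
    using A unfolding aut_def by auto
  have onto: "A ` V = V" and inj: "inj_on A V"
    using bij unfolding bij_betw_def by auto
  define B where "B x = (if x \<in> V then inv_into V A x else x)" for x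
  have B_V: "B x \<in> V" and A_B: "A (B x) = x" if "x \<in> V" for x
    using that inv_into_into[of x A V] f_inv_into_f[of x A V] onto by (auto simp: B_def)
  have B_A: "B (A x) = x" if "x \<in> V" for x
    using that inv_into_f_f[OF inj] aut_maps_into[OF A] by (simp add: B_def)
  have "bij_betw B V V"
    using bij_betw_cong[of V B "inv_into V A"] bij_betw_inv_into[OF bij] by (simp add: B_def)
  moreover have "linear_on_sub V B"
    using linear_on_sub_right_inverse[OF lin inj V] B_V A_B by blast
  moreover have "lam (B x) = lam x" if "x \<in> V" for x
  proof -
    have "lam (B x) = lam (A (B x))" using A B_V[OF that] unfolding aut_def by simp
    then show ?thesis using A_B[OF that] by simp
  qed
  moreover have "\<forall>x. x \<notin> V \<longrightarrow> B x = x" by (simp add: B_def)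
  ultimately have "B \<in> aut V lam"
    unfolding aut_def by blast
  with B_A show ?thesis by blast
qed

lemma aut_closed:
  assumes f: "ftvn V W lam" and fs: "\<And>n. fs n \<in> aut V lam" and A: "A \<in> orth_group V"
    and unif: "\<forall>e>0. eventually (\<lambda>n. \<forall>x\<in>V. norm x \<le> 1 \<longrightarrow> norm (fs n x - A x) \<le> e) sequentially"
  shows "A \<in> aut V lam"
proof -
  have V: "subspace V" using f unfolding ftvn_def by simp
  have "lam (A x) = lam x" if x: "x \<in> V" for x
  proof -
    have Ax: "A x \<in> V" using A x unfolding orth_group_def bij_betw_def by auto
    have "(\<lambda>n. fs n x) \<longlonglongrightarrow> A x"
      using linear_on_sub_tendsto_of_uniform_on_unit_ball[OF V _ _ unif x] fs A
      unfolding aut_def orth_group_def by blast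
    then have "(\<lambda>n. norm (fs n x - A x)) \<longlonglongrightarrow> 0"
      using LIM_zero tendsto_norm_zero by blast
    moreover have "norm (lam (A x) - lam x) \<le> norm (fs n x - A x)" for n
    proof -
      have "lam x = lam (fs n x)" using fs x unfolding aut_def by auto
      then show ?thesis
        using ftvn_nonexpansive[OF f Ax aut_maps_into[OF fs x]] by (simp add: norm_minus_commute)
    qed
    ultimately have "norm (lam (A x) - lam x) \<le> 0"
      by (intro LIMSEQ_le_const) auto
    then show ?thesis by simp
  qed
  then show ?thesis using A unfolding orth_group_def aut_def by auto
qed

lemma closed_subgroup_orth_aut:
  assumes f: "ftvn V W lam"
  shows "closed_subgroup_orth V (aut V lam)"
  unfolding closed_subgroup_orth_def
proof (intro conjI ballI allI impI)
  fix A assume "A \<in> aut V lam"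
  moreover have "subspace V" using f unfolding ftvn_def by simp
  ultimately show "\<exists>B\<in>aut V lam. \<forall>x\<in>V. B (A x) = x" by (rule aut_left_inverse[rotated])
next
  fix fs A
  assume "(\<forall>n. fs n \<in> aut V lam) \<and> A \<in> orth_group V \<and>
    (\<forall>e>0. eventually (\<lambda>n. \<forall>x\<in>V. norm x \<le> 1 \<longrightarrow> norm (fs n x - A x) \<le> e) sequentially)"
  then show "A \<in> aut V lam" using aut_closed[OF f] by blast
qed (use aut_subset_orth_group[OF f] aut_id aut_comp in auto)

lemma nds_idempotent:
  assumes "nds V G lam" "x \<in> V"
  shows "lam (lam x) = lam x"
proof -
  obtain A where "A \<in> G" "x = A (lam x)" using assms unfolding nds_def by blast
  then show ?thesis using assms unfolding nds_def by metis
qed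

lemma nds_subset_aut:
  assumes "nds V G lam"
  shows "G \<subseteq> aut V lam"
  using assms unfolding nds_def closed_subgroup_orth_def orth_group_def aut_def by auto

lemma nds_orbit_transitive:
  assumes n: "nds V G lam"
  shows "orbit_transitive V lam"
  unfolding orbit_transitive_def
proof (intro ballI impI)
  fix x y assume "x \<in> V" "y \<in> V" "lam x = lam y"
  obtain A B where AB: "A \<in> G" "x = A (lam x)" "B \<in> G" "y = B (lam y)"
    using n \<open>x \<in> V\<close> \<open>y \<in> V\<close> unfolding nds_def by meson
  obtain A' where A': "A' \<in> G" "\<forall>z\<in>V. A' (A z) = z"
    using n AB(1) unfolding nds_def closed_subgroup_orth_def by meson
  have "lam x \<in> V" using n \<open>x \<in> V\<close> unfolding nds_def by blast
  then have "A' x = lam x"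
    using A'(2) AB(2) by metis
  then have "y = (B \<circ> A') x"
    using AB(4) \<open>lam x = lam y\<close> by simp
  moreover have "B \<circ> A' \<in> G"
    using n AB(3) A'(1) unfolding nds_def closed_subgroup_orth_def by blast
  ultimately show "\<exists>C\<in>aut V lam. y = C x" using nds_subset_aut[OF n] by blast
qed

lemma nds_aut:
  assumes f: "ftvn V W lam" and ot: "orbit_transitive V lam" and WV: "W \<subseteq> V"
    and idem: "\<forall>x\<in>V. lam (lam x) = lam x"
  shows "nds V (aut V lam) lam"
proof -
  have lam_V: "\<forall>x\<in>V. lam x \<in> V" using f WV unfolding ftvn_def by auto
  have "\<forall>x\<in>V. \<exists>A\<in>aut V lam. x = A (lam x)"
    using ot idem lam_V unfolding orbit_transitive_def by metis
  then show ?thesis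
    using f lam_V closed_subgroup_orth_aut[OF f] unfolding nds_def ftvn_def aut_def by blast
qed

theorem theorem7p3:
  fixes V W :: "'a::real_inner set" and lam :: "'a \<Rightarrow> 'a"
  assumes "ftvn V W lam"
  shows "comes_from_nds V W lam \<longleftrightarrow>
           orbit_transitive V lam \<and> W \<subseteq> V \<and> (\<forall>x\<in>V. lam (lam x) = lam x)"
proof
  assume "comes_from_nds V W lam"
  then obtain G where "W \<subseteq> V" "nds V G lam" unfolding comes_from_nds_def by blast
  then show "orbit_transitive V lam \<and> W \<subseteq> V \<and> (\<forall>x\<in>V. lam (lam x) = lam x)"
    using nds_orbit_transitive nds_idempotent by blast
next
  assume "orbit_transitive V lam \<and> W \<subseteq> V \<and> (\<forall>x\<in>V. lam (lam x) = lam x)"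
  then show "comes_from_nds V W lam"
    using nds_aut[OF assms] unfolding comes_from_nds_def by blast
qed

end
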